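(* Let $n\ge1$, $0<\lambda<1$, $p>1$, let $w$ be a non-negative locally integrable function on $\mathbb{R}^n$ and let $\Omega\subset\mathbb{R}^n$ be a nonempty closed set. For $0<s_1<s_2<\infty$ let $$\mathcal{W}_{s_1,s_2}:=\{Q\in\mathcal{Q}: s_1\,\mathrm{diam}\,Q\le \mathrm{dist}(Q,\Omega)\le s_2\,\mathrm{diam}\,Q\}.$$ Given $0<r_1<r_2<\infty$, there exist $1<\alpha_1<\alpha_2<\infty$ such that $$\|f\|_{\mathcal{M}^p_{\lambda,\mathcal{W}_{r_1,r_2}}(w)}\simeq\|f\|_{\mathcal{M}^p_{\lambda,\mathcal{W}_{\alpha_1,\alpha_2}}(w)},$$ i.e. there is $C\ge1$ independent of $f$ such that each norm is at most $C$ times the other, for all measurable $f$.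
   Context: $\mathcal{Q}$ denotes the family of all cubes in $\mathbb{R}^n$ with sides parallel to the axes. For a family $\mathcal{G}\subset\mathcal{Q}$, $$\|f\|_{\mathcal{M}^p_{\lambda,\mathcal{G}}(w)}:=\sup_{Q\in\mathcal{G}}\Big(\frac{1}{|Q|^{\lambda}}\int_Q|f|^pw\Big)^{1/p}.$$ *)

theory Defs
  imports "HOL-Analysis.Analysis"
begin

definition cube :: "'a::euclidean_space \<Rightarrow> real \<Rightarrow> 'a set" where
  "cube a l = cbox a (a + l *\<^sub>R One)"

definition cubes :: "'a::euclidean_space set set" where
  "cubes = {cube a l | a l. l > 0}"

definition whitney_cubes :: "'a::euclidean_space set \<Rightarrow> real \<Rightarrow> real \<Rightarrow> 'a set set" where
  "whitney_cubes \<Omega> s1 s2 =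
     {Q \<in> cubes. s1 * diameter Q \<le> setdist Q \<Omega> \<and> setdist Q \<Omega> \<le> s2 * diameter Q}"

text \<open>Power on [0,\<infinity>] with the convention \<infinity>^a = \<infinity> (used for a > 0).\<close>
definition enn_powr :: "ennreal \<Rightarrow> real \<Rightarrow> ennreal" where
  "enn_powr x a = (if x = top then top else ennreal (enn2real x powr a))"

definition morrey_norm ::
  "real \<Rightarrow> real \<Rightarrow> 'a::euclidean_space set set \<Rightarrow> ('a \<Rightarrow> real) \<Rightarrow> ('a \<Rightarrow> real) \<Rightarrow> ennreal" where
  "morrey_norm p lam G w f =
     (SUP Q\<in>G. enn_powr
        ((\<integral>\<^sup>+ x\<in>Q. ennreal (\<bar>f x\<bar> powr p * w x) \<partial>lebesgue) / ennreal (measure lebesgue Q powr lam))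
        (1 / p))"

end

theory Submission
  imports Defs
begin

text \<open>
  A cube Q of W(r1,r2) with side l splits into k^n subcubes of side l/k. The distance of
  a subcube to \<Omega> lies between dist(Q,\<Omega>) and dist(Q,\<Omega>) + diam Q, so every subcube
  belongs to W(k r1, k (r2 + 1)); taking k r1 > 1 gives \<alpha>1 = k r1, \<alpha>2 = k (r2 + 1).
  Conversely, a cube of W(\<alpha>1,\<alpha>2) can be enlarged with fixed lower corner until its
  distance to \<Omega> equals r1 times its diameter (intermediate value theorem: the distance is
  Lipschitz in the side length). The enlarged cube lies in W(r1,r2) and its measure grew by
  a factor at most (\<alpha>2/r1)^n. Finally, if every cube of one family is covered by at most M
  cubes of another, each of measure at most K times its own, then the Morrey norm over the
  first family is at most (M K^\<lambda>)^(1/p) times the norm over the second.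
\<close>

lemma mem_cube: "x \<in> cube a l \<longleftrightarrow> (\<forall>i\<in>Basis. a \<bullet> i \<le> x \<bullet> i \<and> x \<bullet> i \<le> a \<bullet> i + l)"
  by (simp add: cube_def mem_box inner_simps)

lemma cube_nonempty: "0 \<le> l \<Longrightarrow> cube a l \<noteq> {}"
  unfolding cube_def by (auto simp: inner_simps box_ne_empty)

lemma compact_cube [intro]: "compact (cube a l)"
  unfolding cube_def by simp

lemma diameter_cube: "0 \<le> l \<Longrightarrow> diameter (cube (a::'a::euclidean_space) l) = l * norm (One::'a)"
  unfolding cube_def by (subst diameter_cbox) (auto simp: inner_simps dist_norm)

lemma measure_cube: "0 \<le> l \<Longrightarrow> measure lebesgue (cube (a::'a::euclidean_space) l) = l ^ DIM('a)"
  unfolding cube_def by (simp add: inner_simps)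

lemma cube_subset_cube: "l \<le> s \<Longrightarrow> cube a l \<subseteq> cube a s"
  by (auto simp: mem_cube) (meson add_left_mono order_trans)

lemma cube_in_cubes: "0 < l \<Longrightarrow> cube a l \<in> cubes"
  unfolding cubes_def by blast

lemma cubesE:
  assumes "Q \<in> cubes" obtains a l where "Q = cube a l" "0 < l"
  using assms unfolding cubes_def by blast

lemma cubesD:
  assumes "Q \<in> cubes"
  shows "compact Q" "Q \<noteq> {}" "Q \<in> sets lebesgue" "0 < measure lebesgue Q"
  using assms by (auto elim!: cubesE simp: cube_nonempty measure_cube) (simp add: cube_def)

lemma setdist_le_setdist_add:
  fixes A B C :: "'a::metric_space set"
  assumes "A \<noteq> {}" and near: "\<forall>x\<in>A. \<exists>y\<in>B. dist x y \<le> e"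
  shows "setdist B C \<le> setdist A C + e"
proof (cases "C = {}")
  case True
  from assms obtain x y :: 'a where "dist x y \<le> e" by fast
  then have "0 \<le> e" using zero_le_dist[of x y] by linarith
  with True show ?thesis by simp
next
  case False
  have "setdist B C - e \<le> setdist A C"
  proof (rule le_setdistI[OF \<open>A \<noteq> {}\<close> False])
    fix x z assume "x \<in> A" "z \<in> C"
    then obtain y where "y \<in> B" "dist x y \<le> e" using near by blast
    have "setdist B C \<le> dist y z" by (rule setdist_le_dist[OF \<open>y \<in> B\<close> \<open>z \<in> C\<close>])
    also have "\<dots> \<le> dist x y + dist x z" by (rule dist_triangle3)
    finally show "setdist B C - e \<le> dist x z" using \<open>dist x y \<le> e\<close> by linarith
  qed
  then show ?thesis by linarith
qed

lemma norm_diff_le_in_cube: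
  assumes "x \<in> cube (a::'a::euclidean_space) l" and l: "0 \<le> l"
  shows "norm (x - a) \<le> l * norm (One::'a)"
proof -
  have "a \<in> cube a l" using l by (simp add: mem_cube)
  then have "dist a x \<le> diameter (cube a l)"
    using assms by (intro diameter_bounded_bound) (auto intro: compact_imp_bounded)
  then show ?thesis using diameter_cube[OF l, of a] by (simp add: dist_norm norm_minus_commute)
qed

lemma setdist_cube_le:
  fixes a :: "'a::euclidean_space"
  assumes "0 < s" "0 < t"
  shows "setdist (cube a t) \<Omega> \<le> setdist (cube a s) \<Omega> + \<bar>s - t\<bar> * norm (One::'a)"
proof (rule setdist_le_setdist_add)
  show "cube a s \<noteq> {}" using assms by (simp add: cube_nonempty)
  show "\<forall>x\<in>cube a s. \<exists>y\<in>cube a t. dist x y \<le> \<bar>s - t\<bar> * norm (One::'a)"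
  proof
    fix x assume x: "x \<in> cube a s"
    define y where "y = a + (t / s) *\<^sub>R (x - a)"
    have "y \<in> cube a t"
      unfolding mem_cube
    proof
      fix i :: 'a assume "i \<in> Basis"
      have xi: "0 \<le> (x - a) \<bullet> i" "(x - a) \<bullet> i \<le> s"
        using x \<open>i \<in> Basis\<close> by (auto simp: mem_cube inner_simps)
      have "(t / s) * ((x - a) \<bullet> i) \<le> (t / s) * s" using xi assms by (intro mult_left_mono) auto
      moreover have "0 \<le> (t / s) * ((x - a) \<bullet> i)" using xi assms by simp
      ultimately show "a \<bullet> i \<le> y \<bullet> i \<and> y \<bullet> i \<le> a \<bullet> i + t"
        unfolding y_def using assms by (simp add: inner_simps)
    qed
    moreover have "dist x y \<le> \<bar>s - t\<bar> * norm (One::'a)"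
    proof -
      have "x - y = (1 - t / s) *\<^sub>R (x - a)" unfolding y_def by (simp add: algebra_simps)
      then have "dist x y = \<bar>1 - t / s\<bar> * norm (x - a)" by (simp add: dist_norm)
      also have "\<dots> \<le> \<bar>1 - t / s\<bar> * (s * norm (One::'a))"
        using norm_diff_le_in_cube[OF x] assms by (intro mult_left_mono) auto
      also have "\<dots> = \<bar>s - t\<bar> * norm (One::'a)"
        using assms by (simp add: field_simps abs_div_pos[symmetric] abs_mult[symmetric])
      finally show ?thesis .
    qed
    ultimately show "\<exists>y\<in>cube a t. dist x y \<le> \<bar>s - t\<bar> * norm (One::'a)" by blast
  qed
qed

lemma lipschitz_on_setdist_cube:
  fixes a :: "'a::euclidean_space"
  shows "(norm (One::'a))-lipschitz_on {0<..} (\<lambda>s. setdist (cube a s) \<Omega>)"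
proof (rule lipschitz_onI)
  fix s t :: real assume "s \<in> {0<..}" "t \<in> {0<..}"
  then have "setdist (cube a t) \<Omega> \<le> setdist (cube a s) \<Omega> + \<bar>s - t\<bar> * norm (One::'a)"
    and "setdist (cube a s) \<Omega> \<le> setdist (cube a t) \<Omega> + \<bar>s - t\<bar> * norm (One::'a)"
    using setdist_cube_le[of s t a \<Omega>] setdist_cube_le[of t s a \<Omega>] abs_minus_commute[of t s] by auto
  then show "dist (setdist (cube a s) \<Omega>) (setdist (cube a t) \<Omega>) \<le> norm (One::'a) * dist s t"
    unfolding dist_real_def abs_le_iff mult.commute[of "norm (One::'a)"] by linarith
qed simp

lemma ex_unit_interval_index:
  fixes u :: real and k :: nat
  assumes "0 \<le> u" "u \<le> real k" "1 \<le> k"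
  shows "\<exists>j<k. real j \<le> u \<and> u \<le> real j + 1"
proof (cases "u < real k")
  case True
  with assms show ?thesis
    by (intro exI[of _ "nat \<lfloor>u\<rfloor>"]) (auto simp: nat_less_iff floor_less_iff)
next
  case False
  with assms show ?thesis by (intro exI[of _ "k - 1"]) (auto simp: of_nat_diff)
qed

lemma cube_eq_Union_subcubes:
  fixes a :: "'a::euclidean_space" and k :: nat
  assumes k: "1 \<le> k" and l: "0 < l"
  shows "\<exists>F. finite F \<and> card F \<le> k ^ DIM('a) \<and> \<Union>F = cube a l \<and> (\<forall>S\<in>F. \<exists>b. S = cube b (l / k))"
proof -
  define h where "h = l / k"
  have h: "0 < h" "real k * h = l" unfolding h_def using k l by auto
  define c where "c j = a + (\<Sum>i\<in>Basis. (h * real (j i)) *\<^sub>R i)" for j :: "'a \<Rightarrow> nat"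
  have mem_subcube: "x \<in> cube (c j) h \<longleftrightarrow>
      (\<forall>i\<in>Basis. h * real (j i) \<le> (x - a) \<bullet> i \<and> (x - a) \<bullet> i \<le> h * real (j i) + h)" for x j
    unfolding mem_cube c_def
    by (simp add: inner_simps inner_sum_left inner_Basis if_distrib[of "\<lambda>x. _ * x"] sum.delta
        cong: if_cong) (auto simp: algebra_simps)
  define J where "J = PiE (Basis::'a set) (\<lambda>_. {..<k})"
  define F where "F = (\<lambda>j. cube (c j) h) ` J"
  have "finite J" unfolding J_def by (simp add: finite_PiE)
  then have "finite F" unfolding F_def by simp
  moreover have "card F \<le> k ^ DIM('a)"
    using card_image_le[OF \<open>finite J\<close>] unfolding F_def J_def by (simp add: card_PiE)
  moreover have "\<Union>F \<subseteq> cube a l"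
  proof (clarsimp simp: F_def)
    fix j y assume "j \<in> J" "y \<in> cube (c j) h"
    show "y \<in> cube a l" unfolding mem_cube
    proof
      fix i :: 'a assume i: "i \<in> Basis"
      have "real (j i) + 1 \<le> real k" using \<open>j \<in> J\<close> i unfolding J_def by (auto simp: PiE_iff)
      then have "h * real (j i) + h \<le> l" using h mult_left_mono[of "real (j i) + 1" k h]
        by (simp add: algebra_simps)
      moreover have "0 \<le> h * real (j i)" using h by simp
      moreover have "h * real (j i) \<le> (y - a) \<bullet> i" "(y - a) \<bullet> i \<le> h * real (j i) + h"
        using \<open>y \<in> cube (c j) h\<close> i unfolding mem_subcube by auto
      ultimately show "a \<bullet> i \<le> y \<bullet> i \<and> y \<bullet> i \<le> a \<bullet> i + l"
        unfolding inner_diff_left by linarith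
    qed
  qed
  moreover have "cube a l \<subseteq> \<Union>F"
  proof
    fix x assume x: "x \<in> cube a l"
    have "\<forall>i\<in>Basis. \<exists>n<k. real n \<le> ((x - a) \<bullet> i) / h \<and> ((x - a) \<bullet> i) / h \<le> real n + 1"
    proof
      fix i :: 'a assume "i \<in> Basis"
      with x have "0 \<le> ((x - a) \<bullet> i) / h" "((x - a) \<bullet> i) / h \<le> real k"
        using h by (auto simp: mem_cube inner_simps field_simps)
      then show "\<exists>n<k. real n \<le> ((x - a) \<bullet> i) / h \<and> ((x - a) \<bullet> i) / h \<le> real n + 1"
        using ex_unit_interval_index k by blast
    qed
    then obtain j where j: "\<forall>i\<in>Basis. j i < k \<and> real (j i) \<le> ((x - a) \<bullet> i) / h \<and>
        ((x - a) \<bullet> i) / h \<le> real (j i) + 1"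
      by metis
    have "restrict j Basis \<in> J" using j unfolding J_def by auto
    moreover have "x \<in> cube (c (restrict j Basis)) h"
      unfolding mem_subcube using j h by (simp add: field_simps)
    ultimately show "x \<in> \<Union>F" unfolding F_def by blast
  qed
  moreover have "\<forall>S\<in>F. \<exists>b. S = cube b (l / k)" unfolding F_def h_def by blast
  ultimately show ?thesis by (intro exI[of _ F]) auto
qed

lemma whitney_cubes_subcube:
  fixes Q S :: "'a::euclidean_space set"
  assumes Q: "Q \<in> whitney_cubes \<Omega> r1 r2" and S: "S \<in> cubes" "S \<subseteq> Q"
    and diam: "diameter Q = k * diameter S"
  shows "S \<in> whitney_cubes \<Omega> (k * r1) (k * (r2 + 1))"
proof -
  have "Q \<in> cubes" using Q unfolding whitney_cubes_def by blast
  have "setdist Q \<Omega> \<le> setdist S \<Omega>"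
    using S by (intro setdist_subset_left) (auto dest: cubesD)
  moreover have "setdist S \<Omega> \<le> setdist Q \<Omega> + diameter Q"
  proof (rule setdist_le_setdist_add)
    show "Q \<noteq> {}" using cubesD[OF \<open>Q \<in> cubes\<close>] by blast
    obtain y where "y \<in> S" using cubesD[OF \<open>S \<in> cubes\<close>] by blast
    then show "\<forall>x\<in>Q. \<exists>y\<in>S. dist x y \<le> diameter Q"
      using S(2) cubesD[OF \<open>Q \<in> cubes\<close>] by (blast intro: diameter_bounded_bound compact_imp_bounded)
  qed
  ultimately show ?thesis
    using Q S(1) unfolding whitney_cubes_def by (simp add: diam algebra_simps)
qed

lemma whitney_cubes_covered_by_subcubes:
  fixes Q :: "'a::euclidean_space set" and k :: nat and r1 r2 :: real
  assumes k: "1 \<le> k" and Q: "Q \<in> whitney_cubes \<Omega> r1 r2"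
  shows "\<exists>F\<subseteq>whitney_cubes \<Omega> (k * r1) (k * (r2 + 1)). finite F \<and> card F \<le> k ^ DIM('a) \<and>
           Q \<subseteq> \<Union>F \<and> (\<forall>S\<in>F. measure lebesgue S \<le> measure lebesgue Q)"
proof -
  obtain a l where Ql: "Q = cube a l" "0 < l"
    using Q unfolding whitney_cubes_def by (blast elim: cubesE)
  obtain F where F: "finite F" "card F \<le> k ^ DIM('a)" "\<Union>F = Q" "\<forall>S\<in>F. \<exists>b. S = cube b (l / k)"
    using cube_eq_Union_subcubes[OF k \<open>0 < l\<close>, of a] Ql(1) by blast
  have "S \<in> whitney_cubes \<Omega> (k * r1) (k * (r2 + 1)) \<and> measure lebesgue S \<le> measure lebesgue Q"
    if "S \<in> F" for S
  proof
    obtain b where b: "S = cube b (l / k)" using F(4) \<open>S \<in> F\<close> by blast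
    have "0 < l / k" "l / k \<le> l" using k Ql(2) by (auto simp: field_simps)
    then have "S \<in> cubes" unfolding b by (simp add: cube_in_cubes)
    moreover have "S \<subseteq> Q" using F(3) \<open>S \<in> F\<close> by blast
    moreover have "diameter Q = k * diameter S"
      using k Ql \<open>0 < l / k\<close> by (simp add: b diameter_cube)
    ultimately show "S \<in> whitney_cubes \<Omega> (k * r1) (k * (r2 + 1))"
      by (rule whitney_cubes_subcube[OF Q])
    show "measure lebesgue S \<le> measure lebesgue Q"
      using \<open>0 < l / k\<close> \<open>l / k \<le> l\<close> by (simp add: b Ql measure_cube power_mono)
  qed
  with F show ?thesis by blast
qed

lemma ex_cube_setdist_eq:
  fixes a :: "'a::euclidean_space"
  assumes r: "0 < r" and l: "0 < l" and lo: "r * diameter (cube a l) \<le> setdist (cube a l) \<Omega>"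
  shows "\<exists>s\<ge>l. setdist (cube a s) \<Omega> = r * diameter (cube a s) \<and>
           r * diameter (cube a s) \<le> setdist (cube a l) \<Omega>"
proof -
  define e where "e = norm (One::'a)"
  have e: "0 < e" unfolding e_def by simp
  have diam: "diameter (cube a s) = s * e" if "0 \<le> s" for s
    unfolding e_def using that by (rule diameter_cube)
  \<comment> \<open>at side T, r * diameter reaches setdist (cube a l) \<Omega> \<ge> setdist (cube a T) \<Omega>\<close>
  define T where "T = setdist (cube a l) \<Omega> / (r * e)"
  have "l \<le> T" unfolding T_def using lo diam[of l] l r e by (simp add: field_simps)
  define \<phi> where "\<phi> s = setdist (cube a s) \<Omega> - r * (s * e)" for s
  have "continuous_on {l..T} (\<lambda>s. setdist (cube a s) \<Omega>)"
    by (rule continuous_on_subset[OF lipschitz_on_continuous_on[OF lipschitz_on_setdist_cube]])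
      (use l in auto)
  then have "continuous_on {l..T} \<phi>" unfolding \<phi>_def by (intro continuous_intros)
  moreover have "0 \<le> \<phi> l" unfolding \<phi>_def using lo diam[of l] l by simp
  moreover have "\<phi> T \<le> 0"
  proof -
    have "setdist (cube a T) \<Omega> \<le> setdist (cube a l) \<Omega>"
      using \<open>l \<le> T\<close> l by (intro setdist_subset_left cube_nonempty cube_subset_cube) auto
    moreover have "r * (T * e) = setdist (cube a l) \<Omega>" unfolding T_def using r e by simp
    ultimately show ?thesis unfolding \<phi>_def by simp
  qed
  ultimately obtain s where s: "l \<le> s" "s \<le> T" "\<phi> s = 0"
    using IVT2'[of \<phi> T 0 l] \<open>l \<le> T\<close> by blast
  have "r * (s * e) \<le> r * (T * e)" using s(2) r e by simp
  also have "r * (T * e) = setdist (cube a l) \<Omega>" unfolding T_def using r e by simp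
  finally show ?thesis using s l diam[of s] unfolding \<phi>_def by (intro exI[of _ s]) auto
qed

lemma whitney_cubes_covered_by_enlargement:
  fixes Q :: "'a::euclidean_space set"
  assumes r: "0 < r1" "r1 \<le> r2" "r1 \<le> \<alpha>1" and Q: "Q \<in> whitney_cubes \<Omega> \<alpha>1 \<alpha>2"
  shows "\<exists>Q'\<in>whitney_cubes \<Omega> r1 r2.
           Q \<subseteq> Q' \<and> measure lebesgue Q' \<le> (\<alpha>2 / r1) ^ DIM('a) * measure lebesgue Q"
proof -
  obtain a l where Ql: "Q = cube a l" "0 < l"
    using Q unfolding whitney_cubes_def by (blast elim: cubesE)
  define e where "e = norm (One::'a)"
  have e: "0 < e" unfolding e_def by simp
  have diam: "diameter (cube a s) = s * e" if "0 \<le> s" for s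
    unfolding e_def using that by (rule diameter_cube)
  have lo: "\<alpha>1 * diameter Q \<le> setdist Q \<Omega>" and hi: "setdist Q \<Omega> \<le> \<alpha>2 * diameter Q"
    using Q unfolding whitney_cubes_def by auto
  have "r1 * diameter Q \<le> \<alpha>1 * diameter Q"
    using r Ql diam[of l] e by (intro mult_right_mono) auto
  then obtain s where s: "l \<le> s" "setdist (cube a s) \<Omega> = r1 * diameter (cube a s)"
      "r1 * diameter (cube a s) \<le> setdist Q \<Omega>"
    using ex_cube_setdist_eq[OF r(1) Ql(2), of a \<Omega>] lo Ql(1) by auto
  have "cube a s \<in> whitney_cubes \<Omega> r1 r2"
    using s Ql r diam[of s] e unfolding whitney_cubes_def
    by (auto intro!: cube_in_cubes mult_right_mono)
  moreover have "Q \<subseteq> cube a s" unfolding Ql by (rule cube_subset_cube[OF s(1)])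
  moreover have "measure lebesgue (cube a s) \<le> (\<alpha>2 / r1) ^ DIM('a) * measure lebesgue Q"
  proof -
    have "r1 * (s * e) \<le> \<alpha>2 * (l * e)" using s(1,3) hi Ql by (simp add: diam)
    then have "s \<le> \<alpha>2 / r1 * l" using r(1) e by (simp add: field_simps)
    have "measure lebesgue (cube a s) = s ^ DIM('a)" using s(1) Ql(2) by (simp add: measure_cube)
    also have "\<dots> \<le> (\<alpha>2 / r1 * l) ^ DIM('a)" using \<open>s \<le> \<alpha>2 / r1 * l\<close> s(1) Ql(2) by (intro power_mono) auto
    also have "\<dots> = (\<alpha>2 / r1) ^ DIM('a) * measure lebesgue Q"
      unfolding Ql(1) measure_cube[OF less_imp_le[OF Ql(2)]] by (rule power_mult_distrib)
    finally show ?thesis .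
  qed
  ultimately show ?thesis by blast
qed

lemma divide_ennreal_le_iff:
  fixes a c :: ennreal and b :: real
  assumes "0 < b"
  shows "a / ennreal b \<le> c \<longleftrightarrow> a \<le> c * ennreal b"
proof
  assume "a / ennreal b \<le> c"
  then have "a / ennreal b * ennreal b \<le> c * ennreal b" by (rule mult_right_mono) simp
  then show "a \<le> c * ennreal b" using assms by (simp add: ennreal_divide_times)
next
  assume "a \<le> c * ennreal b"
  then show "a / ennreal b \<le> c" using assms by (intro divide_le_posI_ennreal) (auto simp: mult.commute)
qed

lemma powr_le_iff_le_powr_inverse:
  fixes t c a :: real
  assumes "0 < a" "0 \<le> t" "0 \<le> c"
  shows "t powr a \<le> c \<longleftrightarrow> t \<le> c powr (1 / a)"
proof
  assume "t powr a \<le> c"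
  then have "(t powr a) powr (1 / a) \<le> c powr (1 / a)" using assms by (intro powr_mono2) auto
  then show "t \<le> c powr (1 / a)" using assms by (simp add: powr_powr)
next
  assume "t \<le> c powr (1 / a)"
  then have "t powr a \<le> (c powr (1 / a)) powr a" using assms by (intro powr_mono2) auto
  then show "t powr a \<le> c" using assms by (simp add: powr_powr)
qed

lemma enn_powr_le_ennreal_iff:
  assumes "0 < a" "0 \<le> c"
  shows "enn_powr x a \<le> ennreal c \<longleftrightarrow> x \<le> ennreal (c powr (1 / a))"
proof (cases x)
  case (real t)
  then show ?thesis using assms by (simp add: enn_powr_def powr_le_iff_le_powr_inverse)
qed (simp add: enn_powr_def top_unique)

lemma morrey_norm_le_iff:
  assumes p: "0 < p" and c: "0 \<le> c" and G: "\<forall>Q\<in>G. 0 < measure lebesgue Q"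
  shows "morrey_norm p lam G w f \<le> ennreal c \<longleftrightarrow>
    (\<forall>Q\<in>G. (\<integral>\<^sup>+ x\<in>Q. ennreal (\<bar>f x\<bar> powr p * w x) \<partial>lebesgue)
              \<le> ennreal (c powr p * measure lebesgue Q powr lam))"
proof -
  have "enn_powr (I / ennreal (m powr lam)) (1 / p) \<le> ennreal c \<longleftrightarrow>
      I \<le> ennreal (c powr p * m powr lam)" if "0 < m" for I m
    using that p c by (simp add: enn_powr_le_ennreal_iff divide_ennreal_le_iff ennreal_mult)
  with G show ?thesis unfolding morrey_norm_def SUP_le_iff by simp
qed

lemma morrey_norm_le_of_cover:
  fixes G1 G2 :: "'a::euclidean_space set set" and M K :: real
  assumes p: "0 < p" and lam: "0 \<le> lam" and M: "0 < M" and K: "0 < K"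
    and meas: "(\<lambda>x. ennreal (\<bar>f x\<bar> powr p * w x)) \<in> borel_measurable lebesgue"
    and G1: "\<forall>Q\<in>G1. 0 < measure lebesgue Q"
    and G2: "\<forall>Q\<in>G2. Q \<in> sets lebesgue \<and> 0 < measure lebesgue Q"
    and cover: "\<forall>Q\<in>G1. \<exists>F\<subseteq>G2. finite F \<and> card F \<le> M \<and> Q \<subseteq> \<Union>F \<and>
                   (\<forall>Q'\<in>F. measure lebesgue Q' \<le> K * measure lebesgue Q)"
  shows "morrey_norm p lam G1 w f \<le> ennreal ((M * K powr lam) powr (1 / p)) * morrey_norm p lam G2 w f"
proof (cases "morrey_norm p lam G2 w f")
  case top
  then show ?thesis using M K by (simp add: ennreal_mult_top)
next
  case (real n)
  define g where "g x = ennreal (\<bar>f x\<bar> powr p * w x)" for x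
  define c where "c = (M * K powr lam) powr (1 / p)"
  have "0 \<le> c * n" unfolding c_def using \<open>0 \<le> n\<close> by simp
  have "\<forall>Q\<in>G2. 0 < measure lebesgue Q" using G2 by blast
  from morrey_norm_le_iff[OF p \<open>0 \<le> n\<close> this, of lam w f] real
  have bound: "\<forall>Q'\<in>G2. (\<integral>\<^sup>+ x\<in>Q'. g x \<partial>lebesgue) \<le> ennreal (n powr p * measure lebesgue Q' powr lam)"
    unfolding g_def by simp
  have "(\<integral>\<^sup>+ x\<in>Q. g x \<partial>lebesgue) \<le> ennreal ((c * n) powr p * measure lebesgue Q powr lam)"
    if "Q \<in> G1" for Q
  proof -
    define m where "m = measure lebesgue Q"
    obtain F where F: "F \<subseteq> G2" "finite F" "card F \<le> M" "Q \<subseteq> \<Union>F"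
        "\<forall>Q'\<in>F. measure lebesgue Q' \<le> K * m"
      using bspec[OF cover \<open>Q \<in> G1\<close>] unfolding m_def by auto
    have "(\<integral>\<^sup>+ x\<in>Q. g x \<partial>lebesgue) \<le> (\<integral>\<^sup>+ x. (\<Sum>Q'\<in>F. g x * indicator Q' x) \<partial>lebesgue)"
    proof (intro nn_integral_mono)
      fix x
      show "g x * indicator Q x \<le> (\<Sum>Q'\<in>F. g x * indicator Q' x)"
      proof (cases "x \<in> Q")
        case True
        then obtain Q0 where "Q0 \<in> F" "x \<in> Q0" using F(4) by blast
        then have "g x * indicator Q0 x \<le> (\<Sum>Q'\<in>F. g x * indicator Q' x)"
          using F(2) by (intro member_le_sum) auto
        with True \<open>x \<in> Q0\<close> show ?thesis by simp
      qed simp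
    qed
    also have "\<dots> = (\<Sum>Q'\<in>F. \<integral>\<^sup>+ x\<in>Q'. g x \<partial>lebesgue)"
    proof (rule nn_integral_sum)
      fix Q' assume "Q' \<in> F"
      then have "Q' \<in> sets lebesgue" using F(1) G2 by blast
      then show "(\<lambda>x. g x * indicator Q' x) \<in> borel_measurable lebesgue"
        using meas unfolding g_def by (intro borel_measurable_times_ennreal borel_measurable_indicator)
    qed
    also have "\<dots> \<le> (\<Sum>Q'\<in>F. ennreal (n powr p * (K * m) powr lam))"
    proof (intro sum_mono)
      fix Q' assume "Q' \<in> F"
      then have "(\<integral>\<^sup>+ x\<in>Q'. g x \<partial>lebesgue) \<le> ennreal (n powr p * measure lebesgue Q' powr lam)"
        using bound F(1) by blast
      also have "\<dots> \<le> ennreal (n powr p * (K * m) powr lam)"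
        using F(5) \<open>Q' \<in> F\<close> lam by (intro ennreal_leI mult_left_mono powr_mono2) auto
      finally show "(\<integral>\<^sup>+ x\<in>Q'. g x \<partial>lebesgue) \<le> ennreal (n powr p * (K * m) powr lam)" .
    qed
    also have "\<dots> = ennreal (card F * (n powr p * (K * m) powr lam))"
      by (simp add: ennreal_mult ennreal_of_nat_eq_real_of_nat)
    also have "\<dots> \<le> ennreal (M * (n powr p * (K * m) powr lam))"
      using F(3) by (intro ennreal_leI mult_right_mono) auto
    also have "M * (n powr p * (K * m) powr lam) = (c * n) powr p * m powr lam"
      using M K p \<open>0 \<le> n\<close> by (simp add: c_def powr_mult powr_powr m_def)
    finally show ?thesis unfolding m_def .
  qed
  then have "morrey_norm p lam G1 w f \<le> ennreal (c * n)"
    unfolding morrey_norm_le_iff[OF p \<open>0 \<le> c * n\<close> G1] g_def by blast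
  then show ?thesis using real by (simp add: c_def ennreal_mult)
qed

lemma locally_integrable_imp_borel_measurable:
  fixes w :: "'a::euclidean_space \<Rightarrow> real"
  assumes "\<forall>K. compact K \<longrightarrow> set_integrable lebesgue K w"
  shows "w \<in> borel_measurable lebesgue"
proof (rule borel_measurable_LIMSEQ_real)
  fix n :: nat
  have "set_integrable lebesgue (cball 0 (real n)) w" using assms by simp
  then show "(\<lambda>x. indicator (cball 0 (real n)) x *\<^sub>R w x) \<in> borel_measurable lebesgue"
    unfolding set_integrable_def by (rule borel_measurable_integrable)
next
  fix x :: 'a
  obtain N :: nat where "norm x \<le> real N" using real_arch_simple by blast
  then have "\<forall>\<^sub>F n in sequentially. indicator (cball 0 (real n)) x *\<^sub>R w x = w x"
    unfolding eventually_sequentially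
    by (intro exI[of _ N]) (auto simp: indicator_def dist_norm)
  then show "(\<lambda>n. indicator (cball 0 (real n)) x *\<^sub>R w x) \<longlonglongrightarrow> w x"
    by (rule tendsto_eventually)
qed

lemma whitney_cubesD:
  assumes "Q \<in> whitney_cubes \<Omega> s1 s2"
  shows "Q \<in> sets lebesgue" "0 < measure lebesgue Q"
  using assms cubesD unfolding whitney_cubes_def by blast+

lemma morrey_norm_whitney_le_subdivided:
  fixes \<Omega> :: "'a::euclidean_space set" and k :: nat and r1 r2 :: real
  assumes "0 < p" "0 \<le> lam" "1 \<le> k"
    and meas: "(\<lambda>x. ennreal (\<bar>f x\<bar> powr p * w x)) \<in> borel_measurable lebesgue"
  shows "morrey_norm p lam (whitney_cubes \<Omega> r1 r2) w f
           \<le> ennreal ((real k ^ DIM('a)) powr (1 / p)) *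
             morrey_norm p lam (whitney_cubes \<Omega> (k * r1) (k * (r2 + 1))) w f"
proof -
  have cover: "\<forall>Q\<in>whitney_cubes \<Omega> r1 r2. \<exists>F\<subseteq>whitney_cubes \<Omega> (k * r1) (k * (r2 + 1)).
      finite F \<and> card F \<le> real k ^ DIM('a) \<and> Q \<subseteq> \<Union>F \<and>
      (\<forall>Q'\<in>F. measure lebesgue Q' \<le> 1 * measure lebesgue Q)"
    using whitney_cubes_covered_by_subcubes[OF \<open>1 \<le> k\<close>, of _ \<Omega> r1 r2] by (simp flip: of_nat_power)
  have "morrey_norm p lam (whitney_cubes \<Omega> r1 r2) w f
           \<le> ennreal ((real k ^ DIM('a) * 1 powr lam) powr (1 / p)) *
             morrey_norm p lam (whitney_cubes \<Omega> (k * r1) (k * (r2 + 1))) w f"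
    by (rule morrey_norm_le_of_cover[OF assms(1,2) _ _ meas _ _ cover])
      (use \<open>1 \<le> k\<close> in \<open>auto simp: whitney_cubesD\<close>)
  then show ?thesis by simp
qed

lemma morrey_norm_whitney_le_enlarged:
  fixes \<Omega> :: "'a::euclidean_space set"
  assumes "0 < p" "0 \<le> lam" "0 < r1" "r1 \<le> r2" "r1 \<le> \<alpha>1" "\<alpha>1 \<le> \<alpha>2"
    and meas: "(\<lambda>x. ennreal (\<bar>f x\<bar> powr p * w x)) \<in> borel_measurable lebesgue"
  shows "morrey_norm p lam (whitney_cubes \<Omega> \<alpha>1 \<alpha>2) w f
           \<le> ennreal (((\<alpha>2 / r1) ^ DIM('a)) powr (lam / p)) *
             morrey_norm p lam (whitney_cubes \<Omega> r1 r2) w f"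
proof -
  have cover: "\<forall>Q\<in>whitney_cubes \<Omega> \<alpha>1 \<alpha>2. \<exists>F\<subseteq>whitney_cubes \<Omega> r1 r2.
      finite F \<and> card F \<le> (1::real) \<and> Q \<subseteq> \<Union>F \<and>
      (\<forall>Q'\<in>F. measure lebesgue Q' \<le> (\<alpha>2 / r1) ^ DIM('a) * measure lebesgue Q)"
  proof
    fix Q assume "Q \<in> whitney_cubes \<Omega> \<alpha>1 \<alpha>2"
    then obtain Q' where "Q' \<in> whitney_cubes \<Omega> r1 r2" "Q \<subseteq> Q'"
        "measure lebesgue Q' \<le> (\<alpha>2 / r1) ^ DIM('a) * measure lebesgue Q"
      using whitney_cubes_covered_by_enlargement[OF assms(3-5)] by blast
    then show "\<exists>F\<subseteq>whitney_cubes \<Omega> r1 r2. finite F \<and> card F \<le> (1::real) \<and> Q \<subseteq> \<Union>F \<and>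
        (\<forall>Q'\<in>F. measure lebesgue Q' \<le> (\<alpha>2 / r1) ^ DIM('a) * measure lebesgue Q)"
      by (intro exI[of _ "{Q'}"]) auto
  qed
  have "morrey_norm p lam (whitney_cubes \<Omega> \<alpha>1 \<alpha>2) w f
           \<le> ennreal ((1 * ((\<alpha>2 / r1) ^ DIM('a)) powr lam) powr (1 / p)) *
             morrey_norm p lam (whitney_cubes \<Omega> r1 r2) w f"
    by (rule morrey_norm_le_of_cover[OF assms(1,2) _ _ meas _ _ cover])
      (use assms in \<open>auto simp: whitney_cubesD\<close>)
  then show ?thesis by (simp add: powr_powr)
qed

theorem lemma3p1:
  fixes w :: "'a::euclidean_space \<Rightarrow> real"
    and \<Omega> :: "'a set"
    and p lam r1 r2 :: real
  assumes "0 < lam" "lam < 1" "p > 1"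
    and "\<forall>x. 0 \<le> w x"
    and "\<forall>K. compact K \<longrightarrow> set_integrable lebesgue K w"
    and "closed \<Omega>" "\<Omega> \<noteq> {}"
    and "0 < r1" "r1 < r2"
  shows "\<exists>\<alpha>1 \<alpha>2. 1 < \<alpha>1 \<and> \<alpha>1 < \<alpha>2 \<and>
           (\<exists>C::real. C \<ge> 1 \<and>
             (\<forall>f \<in> borel_measurable lebesgue.
                morrey_norm p lam (whitney_cubes \<Omega> r1 r2) w f
                  \<le> ennreal C * morrey_norm p lam (whitney_cubes \<Omega> \<alpha>1 \<alpha>2) w f \<and>
                morrey_norm p lam (whitney_cubes \<Omega> \<alpha>1 \<alpha>2) w f
                  \<le> ennreal C * morrey_norm p lam (whitney_cubes \<Omega> r1 r2) w f))"
proof -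
  obtain k :: nat where k: "1 < real k * r1" using ex_less_of_nat_mult[OF \<open>0 < r1\<close>] by blast
  then have "1 \<le> k" using \<open>0 < r1\<close> by (cases k) auto
  define \<alpha>1 \<alpha>2 where "\<alpha>1 = real k * r1" and "\<alpha>2 = real k * (r2 + 1)"
  have \<alpha>: "1 < \<alpha>1" "\<alpha>1 < \<alpha>2" "r1 \<le> \<alpha>1"
    using k \<open>1 \<le> k\<close> assms unfolding \<alpha>1_def \<alpha>2_def by (auto intro: mult_strict_left_mono)
  define c1 c2 where "c1 = (real k ^ DIM('a)) powr (1 / p)"
    and "c2 = ((\<alpha>2 / r1) ^ DIM('a)) powr (lam / p)"
  define C where "C = max 1 (max c1 c2)"
  have le_C: "ennreal c1 * N \<le> ennreal C * N" "ennreal c2 * N \<le> ennreal C * N" for N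
    unfolding C_def by (auto intro!: mult_right_mono ennreal_leI)
  have "morrey_norm p lam (whitney_cubes \<Omega> r1 r2) w f
          \<le> ennreal C * morrey_norm p lam (whitney_cubes \<Omega> \<alpha>1 \<alpha>2) w f \<and>
        morrey_norm p lam (whitney_cubes \<Omega> \<alpha>1 \<alpha>2) w f
          \<le> ennreal C * morrey_norm p lam (whitney_cubes \<Omega> r1 r2) w f"
    if "f \<in> borel_measurable lebesgue" for f
  proof -
    have meas: "(\<lambda>x. ennreal (\<bar>f x\<bar> powr p * w x)) \<in> borel_measurable lebesgue"
      using that locally_integrable_imp_borel_measurable[OF assms(5)] by measurable
    have "morrey_norm p lam (whitney_cubes \<Omega> r1 r2) w f
            \<le> ennreal c1 * morrey_norm p lam (whitney_cubes \<Omega> \<alpha>1 \<alpha>2) w f"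
      unfolding c1_def \<alpha>1_def \<alpha>2_def using assms \<open>1 \<le> k\<close> meas
      by (intro morrey_norm_whitney_le_subdivided) auto
    moreover have "morrey_norm p lam (whitney_cubes \<Omega> \<alpha>1 \<alpha>2) w f
            \<le> ennreal c2 * morrey_norm p lam (whitney_cubes \<Omega> r1 r2) w f"
      unfolding c2_def using assms \<alpha> meas by (intro morrey_norm_whitney_le_enlarged) auto
    ultimately show ?thesis using le_C by (blast intro: order_trans)
  qed
  moreover have "C \<ge> 1" unfolding C_def by simp
  ultimately show ?thesis using \<alpha> by blast
qed

end
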